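(* Let $R_1,R_2>0$, $s:=R_2-R_1$ and $\lambda:=2\sqrt{R_1R_2}$. There is a diffeomorphism $$F:(D_\lambda S^2,\ \mathrm{d}\alpha-s\pi^*\sigma)\to(S^2\times S^2\setminus\Delta,\ R_1\sigma\oplus R_2\sigma)$$ which is a symplectomorphism and is $\mathrm{SO}(3)$-equivariant, with moment maps related by $\mu_{D_\lambda S^2}=\mu_{S^2\times S^2}\circ F$. Consequently, with $E(x,v)=\tfrac12|v|^2$ and $H(N,S)=R_1R_2(1-N\cdot S)$, one has $H\circ F=\tfrac12\lambda^2-E$.
   Context: $S^2\subset\mathbb{R}^3$ is the unit sphere with the round metric, $TS^2=\{(x,v)\in\mathbb{R}^3\times\mathbb{R}^3: |x|=1,\ x\cdot v=0\}$, $D_\lambda S^2=\{(x,v)\in TS^2:|v|<\lambda\}$, $\pi(x,v)=x$, $\alpha_{(x,v)}(\xi)=v\cdot\mathrm{d}\pi(\xi)$, and $\sigma$ is the round area form, $\sigma_x(u,w)=x\cdot(u\times w)$. $\Delta\subset S^2\times S^2$ is the diagonal. $\mathrm{SO}(3)$ acts on $D_\lambda S^2$ by $g\cdot(x,v)=(gx,gv)$ and diagonally on $S^2\times S^2$. Identifying $\mathfrak{so}(3)\cong\mathbb{R}^3$, the moment maps (with convention $\omega(\rho(\xi),\cdot)=-\mathrm{d}\langle\mu,\xi\rangle$ for the generating vector field $\rho(\xi)$) are $\mu_{D_\lambda S^2}(x,v)=x\times v-sx$ and $\mu_{S^2\times S^2}(N,S)=R_1N+R_2S$. *)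

theory Defs
  imports "HOL-Analysis.Analysis"
begin

type_synonym r3 = "real^3"

fun Ck_on :: "nat \<Rightarrow> 'a::euclidean_space set \<Rightarrow> ('a \<Rightarrow> 'b::euclidean_space) \<Rightarrow> bool" where
  "Ck_on 0 U f = continuous_on U f"
| "Ck_on (Suc k) U f = (f differentiable_on U \<and>
      (\<forall>v. Ck_on k U (\<lambda>p. frechet_derivative f (at p) v)))"

definition smooth_on :: "'a::euclidean_space set \<Rightarrow> ('a \<Rightarrow> 'b::euclidean_space) \<Rightarrow> bool" where
  "smooth_on U f \<longleftrightarrow> (\<forall>k. Ck_on k U f)"

definition smooth_map_on :: "'a::euclidean_space set \<Rightarrow> ('a \<Rightarrow> 'b::euclidean_space) \<Rightarrow> bool" where
  "smooth_map_on A f \<longleftrightarrow> (\<exists>U g. open U \<and> A \<subseteq> U \<and> smooth_on U g \<and> (\<forall>p\<in>A. g p = f p))"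

definition diffeo_betw :: "('a::euclidean_space \<Rightarrow> 'b::euclidean_space) \<Rightarrow> 'a set \<Rightarrow> 'b set \<Rightarrow> bool" where
  "diffeo_betw f A B \<longleftrightarrow> bij_betw f A B \<and> smooth_map_on A f \<and> smooth_map_on B (inv_into A f)"

definition S2 :: "r3 set" where
  "S2 = {x. norm x = 1}"

definition TS2 :: "(r3 \<times> r3) set" where
  "TS2 = {(x, v). norm x = 1 \<and> x \<bullet> v = 0}"

definition disk_bundle :: "real \<Rightarrow> (r3 \<times> r3) set" where
  "disk_bundle lam = {(x, v). (x, v) \<in> TS2 \<and> norm v < lam}"

definition diag_S2 :: "(r3 \<times> r3) set" where
  "diag_S2 = {(N, S). N \<in> S2 \<and> S = N}"

definition S2xS2_minus_diag :: "(r3 \<times> r3) set" where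
  "S2xS2_minus_diag = (S2 \<times> S2) - diag_S2"

definition tangent_TS2 :: "r3 \<times> r3 \<Rightarrow> (r3 \<times> r3) set" where
  "tangent_TS2 p = {(u, w). fst p \<bullet> u = 0 \<and> u \<bullet> snd p + fst p \<bullet> w = 0}"

definition tangent_S2xS2 :: "r3 \<times> r3 \<Rightarrow> (r3 \<times> r3) set" where
  "tangent_S2xS2 p = {(a, b). fst p \<bullet> a = 0 \<and> snd p \<bullet> b = 0}"

definition sigma :: "r3 \<Rightarrow> r3 \<Rightarrow> r3 \<Rightarrow> real" where
  "sigma x u w = x \<bullet> (cross3 u w)"

text \<open>d alpha, with the sign convention under which the stated moment map
  x \<times> v - s x is correct: d alpha((u1,w1),(u2,w2)) = u1.w2 - u2.w1.\<close>
definition dalpha :: "r3 \<times> r3 \<Rightarrow> r3 \<times> r3 \<Rightarrow> r3 \<times> r3 \<Rightarrow> real" where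
  "dalpha p \<xi>1 \<xi>2 = fst \<xi>1 \<bullet> snd \<xi>2 - fst \<xi>2 \<bullet> snd \<xi>1"

definition omega_disk :: "real \<Rightarrow> r3 \<times> r3 \<Rightarrow> r3 \<times> r3 \<Rightarrow> r3 \<times> r3 \<Rightarrow> real" where
  "omega_disk s p \<xi>1 \<xi>2 = dalpha p \<xi>1 \<xi>2 - s * sigma (fst p) (fst \<xi>1) (fst \<xi>2)"

definition omega_prod :: "real \<Rightarrow> real \<Rightarrow> r3 \<times> r3 \<Rightarrow> r3 \<times> r3 \<Rightarrow> r3 \<times> r3 \<Rightarrow> real" where
  "omega_prod R1 R2 q \<eta>1 \<eta>2 =
     R1 * sigma (fst q) (fst \<eta>1) (fst \<eta>2) + R2 * sigma (snd q) (snd \<eta>1) (snd \<eta>2)"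

definition SO3 :: "(real^3^3) set" where
  "SO3 = {g. orthogonal_matrix g \<and> det g = 1}"

definition act :: "real^3^3 \<Rightarrow> r3 \<times> r3 \<Rightarrow> r3 \<times> r3" where
  "act g p = (g *v fst p, g *v snd p)"

definition mu_disk :: "real \<Rightarrow> r3 \<times> r3 \<Rightarrow> r3" where
  "mu_disk s p = cross3 (fst p) (snd p) - s *\<^sub>R fst p"

definition mu_prod :: "real \<Rightarrow> real \<Rightarrow> r3 \<times> r3 \<Rightarrow> r3" where
  "mu_prod R1 R2 q = R1 *\<^sub>R fst q + R2 *\<^sub>R snd q"

definition E_kin :: "r3 \<times> r3 \<Rightarrow> real" where
  "E_kin p = (norm (snd p))^2 / 2"

definition H_prod :: "real \<Rightarrow> real \<Rightarrow> r3 \<times> r3 \<Rightarrow> real" where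
  "H_prod R1 R2 q = R1 * R2 * (1 - fst q \<bullet> snd q)"

end

theory Submission
  imports Defs
begin

(* The map F sends (x, v) to the pair (N, S) in the plane spanned by x and x \<times> v that is
   determined by |N| = |S| = 1, by the relation of moment maps R1 N + R2 S = x \<times> v - s x, and by
   R1 R2 (1 - N \<bullet> S) = (lam^2 - |v|^2) / 2, which is the relation H \<circ> F = lam^2/2 - E.
   With q = sqrt (lam^2 - |v|^2) > 0 the coefficients are explicit rational functions of q, and
   N \<noteq> S exactly because q > 0. Conversely x is a combination of N and S, and v = \<mu> \<times> x.
   Since F is built from inner and cross products only, it commutes with SO(3); hence it suffices
   to check that F is symplectic at the points (e1, r e2), where this reduces to a handful of
   rational identities between the coefficients. *)

section \<open>Smooth maps between open sets\<close>

lemma Ck_on_SucD: "Ck_on (Suc k) U f \<Longrightarrow> Ck_on k U f"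
proof (induction k arbitrary: f)
  case 0
  then show ?case by (auto intro: differentiable_imp_continuous_on)
next
  case (Suc k)
  then show ?case by simp
qed

lemma Ck_on_has_derivative:
  assumes "open U" "Ck_on (Suc k) U f" "p \<in> U"
  shows "(f has_derivative frechet_derivative f (at p)) (at p)"
proof -
  have "f differentiable (at p within U)"
    using assms(2,3) by (auto simp: differentiable_on_def)
  then show ?thesis
    using at_within_open[OF assms(3,1)] by (simp add: frechet_derivative_works[symmetric])
qed

lemma Ck_on_cong:
  assumes "open U" "\<And>p. p \<in> U \<Longrightarrow> f p = g p" "Ck_on k U f"
  shows "Ck_on k U g"
  using assms(2,3)
proof (induction k arbitrary: f g)
  case 0
  then show ?case using continuous_on_cong by simp
next
  case (Suc k)
  have g': "(g has_derivative frechet_derivative f (at p)) (at p)" if "p \<in> U" for p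
    using Ck_on_has_derivative[OF assms(1) Suc.prems(2) that] Suc.prems(1)
      has_derivative_transform_within_open[OF _ assms(1) that] by blast
  then have "frechet_derivative g (at p) = frechet_derivative f (at p)" if "p \<in> U" for p
    using that frechet_derivative_at by metis
  then have "Ck_on k U (\<lambda>p. frechet_derivative g (at p) v)" for v
    using Suc.IH[of "\<lambda>p. frechet_derivative f (at p) v"] Suc.prems by auto
  moreover have "g differentiable_on U"
    using g' by (auto simp: differentiable_on_def intro: differentiable_at_withinI differentiableI)
  ultimately show ?case by simp
qed

lemma Ck_on_SucI:
  assumes "open U" "\<And>p. p \<in> U \<Longrightarrow> (f has_derivative f' p) (at p)"
    and "\<And>v. Ck_on k U (\<lambda>p. f' p v)"
  shows "Ck_on (Suc k) U f"
proof -
  have "f differentiable_on U"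
    using assms(2)
    by (auto simp: differentiable_on_def intro: differentiable_at_withinI differentiableI)
  moreover have "Ck_on k U (\<lambda>p. frechet_derivative f (at p) v)" for v
    by (rule Ck_on_cong[OF assms(1) _ assms(3)]) (simp add: frechet_derivative_at[OF assms(2)])
  ultimately show ?thesis by simp
qed

lemma Ck_on_const: "open U \<Longrightarrow> Ck_on k U (\<lambda>p. c)"
proof (induction k arbitrary: c)
  case 0
  then show ?case by simp
next
  case (Suc k)
  then show ?case by (intro Ck_on_SucI[where f'="\<lambda>p v. 0"]) auto
qed

lemma Ck_on_bounded_linear:
  assumes "open U" "bounded_linear L"
  shows "Ck_on k U L"
proof (cases k)
  case 0
  then show ?thesis using assms(2) by (simp add: linear_continuous_on)
next
  case (Suc k')
  have "Ck_on (Suc k') U L"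
    using assms
    by (intro Ck_on_SucI[where f'="\<lambda>p. L"] Ck_on_const bounded_linear_imp_has_derivative)
  then show ?thesis using Suc by simp
qed

lemma Ck_on_compose_bounded_linear:
  assumes "open U" "bounded_linear L"
  shows "Ck_on k U f \<Longrightarrow> Ck_on k U (\<lambda>p. L (f p))"
proof (induction k arbitrary: f)
  case 0
  then show ?case
    using continuous_on_compose2[OF linear_continuous_on[OF assms(2)], of U f UNIV] by simp
next
  case (Suc k)
  show ?case
  proof (rule Ck_on_SucI[where f'="\<lambda>p v. L (frechet_derivative f (at p) v)"])
    show "((\<lambda>p. L (f p)) has_derivative (\<lambda>v. L (frechet_derivative f (at p) v))) (at p)"
      if "p \<in> U" for p
      using bounded_linear.has_derivative[OF assms(2)
          Ck_on_has_derivative[OF assms(1) Suc.prems that]] .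
  qed (use assms(1) Suc in auto)
qed

lemma Ck_on_add:
  assumes "open U"
  shows "Ck_on k U f \<Longrightarrow> Ck_on k U g \<Longrightarrow> Ck_on k U (\<lambda>p. f p + g p)"
proof (induction k arbitrary: f g)
  case 0
  then show ?case by (simp add: continuous_on_add)
next
  case (Suc k)
  show ?case
  proof (rule Ck_on_SucI[where
        f'="\<lambda>p v. frechet_derivative f (at p) v + frechet_derivative g (at p) v"])
    show "((\<lambda>p. f p + g p) has_derivative
        (\<lambda>v. frechet_derivative f (at p) v + frechet_derivative g (at p) v)) (at p)"
      if "p \<in> U" for p
      using Suc.prems by (intro has_derivative_add Ck_on_has_derivative[OF assms(1) _ that])
  qed (use assms Suc in auto)
qed

lemma Ck_on_bounded_bilinear:
  assumes "open U" "bounded_bilinear bil"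
  shows "Ck_on k U f \<Longrightarrow> Ck_on k U g \<Longrightarrow> Ck_on k U (\<lambda>p. bil (f p) (g p))"
proof (induction k arbitrary: f g)
  case 0
  then show ?case by (simp add: bounded_bilinear.continuous_on[OF assms(2)])
next
  case (Suc k)
  show ?case
  proof (rule Ck_on_SucI[where f'="\<lambda>p v. bil (f p) (frechet_derivative g (at p) v)
                                      + bil (frechet_derivative f (at p) v) (g p)"])
    show "((\<lambda>p. bil (f p) (g p)) has_derivative (\<lambda>v. bil (f p) (frechet_derivative g (at p) v)
              + bil (frechet_derivative f (at p) v) (g p))) (at p)" if "p \<in> U" for p
      using Suc.prems
      by (intro bounded_bilinear.FDERIV[OF assms(2)] Ck_on_has_derivative[OF assms(1) _ that])
    show "Ck_on k U (\<lambda>p. bil (f p) (frechet_derivative g (at p) v)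
              + bil (frechet_derivative f (at p) v) (g p))" for v
      using Suc.prems Ck_on_SucD[OF Suc.prems(1)] Ck_on_SucD[OF Suc.prems(2)]
      by (intro Ck_on_add[OF assms(1)] Suc.IH) auto
  qed (use assms in auto)
qed

lemma Ck_on_Pair:
  assumes "open U"
  shows "Ck_on k U f \<Longrightarrow> Ck_on k U g \<Longrightarrow> Ck_on k U (\<lambda>p. (f p, g p))"
proof (induction k arbitrary: f g)
  case 0
  then show ?case by (simp add: continuous_on_Pair)
next
  case (Suc k)
  show ?case
  proof (rule Ck_on_SucI[where
        f'="\<lambda>p v. (frechet_derivative f (at p) v, frechet_derivative g (at p) v)"])
    show "((\<lambda>p. (f p, g p)) has_derivative
        (\<lambda>v. (frechet_derivative f (at p) v, frechet_derivative g (at p) v))) (at p)"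
      if "p \<in> U" for p
      using Suc.prems by (intro has_derivative_Pair Ck_on_has_derivative[OF assms(1) _ that])
  qed (use assms Suc in auto)
qed

lemma Ck_on_mult:
  fixes f g :: "'a::euclidean_space \<Rightarrow> real"
  shows "open U \<Longrightarrow> Ck_on k U f \<Longrightarrow> Ck_on k U g \<Longrightarrow> Ck_on k U (\<lambda>p. f p * g p)"
  using Ck_on_bounded_bilinear[OF _ bounded_bilinear_mult] by blast

lemma Ck_on_scaleR:
  fixes f :: "'a::euclidean_space \<Rightarrow> real"
  shows "open U \<Longrightarrow> Ck_on k U f \<Longrightarrow> Ck_on k U g \<Longrightarrow> Ck_on k U (\<lambda>p. f p *\<^sub>R g p)"
  using Ck_on_bounded_bilinear[OF _ bounded_bilinear_scaleR] by blast

lemma Ck_on_inner: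
  "open U \<Longrightarrow> Ck_on k U f \<Longrightarrow> Ck_on k U g \<Longrightarrow> Ck_on k U (\<lambda>p. f p \<bullet> g p)"
  using Ck_on_bounded_bilinear[OF _ bounded_bilinear_inner] by blast

lemma Ck_on_cross3:
  "open U \<Longrightarrow> Ck_on k U f \<Longrightarrow> Ck_on k U g \<Longrightarrow> Ck_on k U (\<lambda>p. cross3 (f p) (g p))"
  using Ck_on_bounded_bilinear[OF _ bilinear_cross[unfolded bilinear_conv_bounded_bilinear]]
  by blast

lemma Ck_on_uminus: "open U \<Longrightarrow> Ck_on k U f \<Longrightarrow> Ck_on k U (\<lambda>p. - f p)"
  using Ck_on_compose_bounded_linear[OF _ bounded_linear_minus[OF bounded_linear_ident]] by blast

lemma Ck_on_diff:
  "open U \<Longrightarrow> Ck_on k U f \<Longrightarrow> Ck_on k U g \<Longrightarrow> Ck_on k U (\<lambda>p. f p - g p)"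
  unfolding diff_conv_add_uminus by (intro Ck_on_add Ck_on_uminus)

lemma Ck_on_inverse:
  fixes f :: "'a::euclidean_space \<Rightarrow> real"
  assumes "open U" "\<And>p. p \<in> U \<Longrightarrow> f p \<noteq> 0"
  shows "Ck_on k U f \<Longrightarrow> Ck_on k U (\<lambda>p. inverse (f p))"
proof (induction k)
  case 0
  then show ?case using assms(2) by (simp add: continuous_on_inverse)
next
  case (Suc k)
  show ?case
  proof (rule Ck_on_SucI[where
        f'="\<lambda>p v. - (inverse (f p) * frechet_derivative f (at p) v * inverse (f p))"])
    show "((\<lambda>p. inverse (f p)) has_derivative
        (\<lambda>v. - (inverse (f p) * frechet_derivative f (at p) v * inverse (f p)))) (at p)"
      if "p \<in> U" for p
      using Deriv.has_derivative_inverse[OF assms(2)[OF that]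
          Ck_on_has_derivative[OF assms(1) Suc.prems that]] .
    have "Ck_on k U (\<lambda>p. inverse (f p))"
      using Suc.IH Ck_on_SucD[OF Suc.prems] .
    then show "Ck_on k U (\<lambda>p. - (inverse (f p) * frechet_derivative f (at p) v * inverse (f p)))"
      for v
      using Suc.prems assms(1) by (intro Ck_on_uminus Ck_on_mult) auto
  qed (rule assms(1))
qed

lemma Ck_on_divide:
  fixes f g :: "'a::euclidean_space \<Rightarrow> real"
  assumes "open U" "\<And>p. p \<in> U \<Longrightarrow> g p \<noteq> 0"
  shows "Ck_on k U f \<Longrightarrow> Ck_on k U g \<Longrightarrow> Ck_on k U (\<lambda>p. f p / g p)"
  unfolding divide_inverse using assms by (intro Ck_on_mult Ck_on_inverse)

lemma Ck_on_sqrt: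
  fixes f :: "'a::euclidean_space \<Rightarrow> real"
  assumes "open U" "\<And>p. p \<in> U \<Longrightarrow> f p > 0"
  shows "Ck_on k U f \<Longrightarrow> Ck_on k U (\<lambda>p. sqrt (f p))"
proof (induction k)
  case 0
  then show ?case by (simp add: continuous_on_real_sqrt)
next
  case (Suc k)
  show ?case
  proof (rule Ck_on_SucI[where
        f'="\<lambda>p v. frechet_derivative f (at p) v * (inverse (sqrt (f p)) / 2)"])
    show "((\<lambda>p. sqrt (f p)) has_derivative
        (\<lambda>v. frechet_derivative f (at p) v * (inverse (sqrt (f p)) / 2))) (at p)" if "p \<in> U" for p
      using DERIV_compose_FDERIV[OF DERIV_real_sqrt[OF assms(2)[OF that]]
          Ck_on_has_derivative[OF assms(1) Suc.prems that]] .
    have "Ck_on k U (\<lambda>p. sqrt (f p))"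
      using Suc.IH Ck_on_SucD[OF Suc.prems] .
    moreover have "sqrt (f p) \<noteq> 0" if "p \<in> U" for p
      using assms(2)[OF that] by simp
    ultimately have "Ck_on k U (\<lambda>p. inverse (sqrt (f p)) / 2)"
      by (intro Ck_on_divide Ck_on_inverse Ck_on_const assms(1)) simp_all
    moreover have "Ck_on k U (\<lambda>p. frechet_derivative f (at p) v)" for v
      using Suc.prems by simp
    ultimately show "Ck_on k U (\<lambda>p. frechet_derivative f (at p) v * (inverse (sqrt (f p)) / 2))"
      for v
      by (intro Ck_on_mult assms(1))
  qed (rule assms(1))
qed

section \<open>The coefficients of the map\<close>

(* With q = sqrt (lam^2 - |v|^2), the map sends (x, v) to
     N = coef_x R1 R2 q x + coef_xv R1 R2 q (x \<times> v),
     S = - coef_x R2 R1 q x + coef_xv R2 R1 q (x \<times> v);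
   coef_x' and coef_xv' are the derivatives in q, and x = coef_N R1 R2 q N - coef_N R2 R1 q S. *)

definition coef_x :: "real \<Rightarrow> real \<Rightarrow> real \<Rightarrow> real" where
  "coef_x a b q = (q\<^sup>2 + 2*a*q + 2*a*(a - b)) / (2*a*(a + b + q))"

definition coef_xv :: "real \<Rightarrow> real \<Rightarrow> real \<Rightarrow> real" where
  "coef_xv a b q = (2*a + q) / (2*a*(a + b + q))"

definition coef_x' :: "real \<Rightarrow> real \<Rightarrow> real \<Rightarrow> real" where
  "coef_x' a b q = (q\<^sup>2 + 2*a*q + 2*b*(2*a + q)) / (2*a*(a + b + q)\<^sup>2)"

definition coef_xv' :: "real \<Rightarrow> real \<Rightarrow> real \<Rightarrow> real" where
  "coef_xv' a b q = (b - a) / (2*a*(a + b + q)\<^sup>2)"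

definition coef_N :: "real \<Rightarrow> real \<Rightarrow> real \<Rightarrow> real" where
  "coef_N a b q = a*(2*b + q) / (q*(a + b + q))"

context
  fixes a b q :: real
  assumes pos: "a > 0" "b > 0" "q > 0"
begin

private lemma denominators_nonzero:
  "a \<noteq> 0" "b \<noteq> 0" "q \<noteq> 0" "a + b + q \<noteq> 0" "b + a + q \<noteq> 0"
  using pos by auto

lemma coef_x_mu: "a * coef_x a b q - b * coef_x b a q = a - b"
  unfolding coef_x_def using denominators_nonzero
  by (simp add: divide_simps) (simp add: algebra_simps power2_eq_square)

lemma coef_xv_mu: "a * coef_xv a b q + b * coef_xv b a q = 1"
  unfolding coef_xv_def using denominators_nonzero
  by (simp add: divide_simps) (simp add: algebra_simps)

lemma coef_norm: "(coef_x a b q)\<^sup>2 + (coef_xv a b q)\<^sup>2 * (4*a*b - q\<^sup>2) = 1"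
  unfolding coef_x_def coef_xv_def using denominators_nonzero
  by (simp add: divide_simps) (simp add: algebra_simps power2_eq_square)

lemma coef_energy:
  "a*b*(1 + coef_x a b q * coef_x b a q - coef_xv a b q * coef_xv b a q * (4*a*b - q\<^sup>2))
    = q\<^sup>2/2"
  unfolding coef_x_def coef_xv_def using denominators_nonzero
  by (simp add: divide_simps) (simp add: algebra_simps power2_eq_square)

lemma coef_N_coef_x: "coef_N a b q * coef_x a b q + coef_N b a q * coef_x b a q = 1"
  unfolding coef_N_def coef_x_def using denominators_nonzero
  by (simp add: divide_simps) (simp add: algebra_simps power2_eq_square)

lemma coef_N_coef_xv: "coef_N a b q * coef_xv a b q = coef_N b a q * coef_xv b a q"
  unfolding coef_N_def coef_xv_def using denominators_nonzero
  by (simp add: divide_simps) (simp add: algebra_simps)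

lemma coef_N_right_inverse:
  "(coef_x a b q + (b - a) * coef_xv a b q) * coef_N a b q + a * coef_xv a b q = 1"
  "(coef_x a b q + (b - a) * coef_xv a b q) * coef_N b a q = b * coef_xv a b q"
  unfolding coef_N_def coef_x_def coef_xv_def using denominators_nonzero
  by (simp_all add: divide_simps) (simp_all add: algebra_simps power2_eq_square)

lemma coef_N_norm:
  "(coef_N a b q)\<^sup>2 - 2 * coef_N a b q * coef_N b a q * (1 - q\<^sup>2/(2*a*b)) + (coef_N b a q)\<^sup>2 = 1"
  unfolding coef_N_def using denominators_nonzero pos
  by (simp add: divide_simps) (simp add: algebra_simps power2_eq_square)

lemma coef_N_mu:
  "a * coef_N a b q - b * coef_N b a q + (b * coef_N a b q - a * coef_N b a q) * (1 - q\<^sup>2/(2*a*b))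
    = a - b"
  unfolding coef_N_def using denominators_nonzero pos
  by (simp add: divide_simps) (simp add: algebra_simps power2_eq_square)

lemma coef_wronskian:
  "coef_x a b q * coef_xv' a b q - coef_xv a b q * coef_x' a b q
     = - (q\<^sup>2 + 4*a*q + 2*a*(a + b)) / (4*a\<^sup>2*(a + b + q)\<^sup>2)"
  unfolding coef_x_def coef_xv_def coef_x'_def coef_xv'_def using denominators_nonzero
  by (simp add: divide_simps) (simp add: algebra_simps power2_eq_square power3_eq_cube)

(* The left-hand side is the coefficient of the transverse terms in the pull-back of sigma
   along N (see sigma_xv_comb_normal_form). *)
lemma coef_sigma_eq_coef_N:
  "coef_x a b q * coef_xv a b q
     - (4*a*b - q\<^sup>2) / q * (coef_x a b q * coef_xv' a b q - coef_xv a b q * coef_x' a b q)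
   = coef_N a b q / a"
  unfolding coef_wronskian unfolding coef_x_def coef_xv_def coef_N_def using denominators_nonzero
  by (simp add: divide_simps) (simp add: algebra_simps power2_eq_square)

lemma has_real_derivative_coef_x: "(coef_x a b has_real_derivative coef_x' a b q) (at q)"
proof -
  have "((\<lambda>q. (q\<^sup>2 + 2*a*q + 2*a*(a - b)) / (2*a*(a + b + q))) has_real_derivative
     ((2*q + 2*a) * (2*a*(a + b + q)) - (q\<^sup>2 + 2*a*q + 2*a*(a - b)) * (2*a))
       / (2*a*(a + b + q))\<^sup>2) (at q)"
    using denominators_nonzero by (auto intro!: derivative_eq_intros simp: power2_eq_square)
  moreover have "((2*q + 2*a) * (2*a*(a + b + q)) - (q\<^sup>2 + 2*a*q + 2*a*(a - b)) * (2*a))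
      / (2*a*(a + b + q))\<^sup>2 = coef_x' a b q"
    unfolding coef_x'_def using denominators_nonzero
    by (simp add: divide_simps) (simp add: algebra_simps power2_eq_square)
  ultimately show ?thesis unfolding coef_x_def[abs_def] by simp
qed

lemma has_real_derivative_coef_xv: "(coef_xv a b has_real_derivative coef_xv' a b q) (at q)"
proof -
  have "((\<lambda>q. (2*a + q) / (2*a*(a + b + q))) has_real_derivative
     (2*a*(a + b + q) - (2*a + q) * (2*a)) / (2*a*(a + b + q))\<^sup>2) (at q)"
    using denominators_nonzero by (auto intro!: derivative_eq_intros simp: power2_eq_square)
  moreover have "(2*a*(a + b + q) - (2*a + q) * (2*a)) / (2*a*(a + b + q))\<^sup>2 = coef_xv' a b q"
    unfolding coef_xv'_def using denominators_nonzero
    by (simp add: divide_simps) (simp add: algebra_simps power2_eq_square)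
  ultimately show ?thesis unfolding coef_xv_def[abs_def] by simp
qed

end

lemma Ck_on_coef:
  assumes "open U" "a > 0" "b > 0" "Ck_on k U h" "\<And>p. p \<in> U \<Longrightarrow> h p > 0"
  shows "Ck_on k U (\<lambda>p. coef_x a b (h p))" "Ck_on k U (\<lambda>p. coef_xv a b (h p))"
    and "Ck_on k U (\<lambda>p. coef_N a b (h p))"
proof -
  have nz: "2*a*(a + b + h p) \<noteq> 0" "h p * (a + b + h p) \<noteq> 0" if "p \<in> U" for p
    using assms(2,3) assms(5)[OF that] by (simp_all add: add_pos_pos)
  have sq: "Ck_on k U (\<lambda>p. h p * h p)"
    by (intro Ck_on_mult assms(1,4))
  have "Ck_on k U (\<lambda>p. 2*a*(a + b + h p))" "Ck_on k U (\<lambda>p. h p * (a + b + h p))"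
    by (intro Ck_on_mult Ck_on_add Ck_on_const assms(1,4))+
  then show "Ck_on k U (\<lambda>p. coef_x a b (h p))" "Ck_on k U (\<lambda>p. coef_xv a b (h p))"
    "Ck_on k U (\<lambda>p. coef_N a b (h p))"
    unfolding coef_x_def coef_xv_def coef_N_def power2_eq_square
    using nz sq assms(1,4)
    by (auto intro!: Ck_on_divide Ck_on_add Ck_on_diff Ck_on_mult Ck_on_const)
qed

section \<open>The map and its inverse\<close>

lemma cross3_cross3_left: "cross3 (cross3 a b) c = (a \<bullet> c) *\<^sub>R b - (b \<bullet> c) *\<^sub>R a"
  using Lagrange[of c a b] cross_skew[of "cross3 a b" c] by (simp add: inner_commute)

lemma inner_cross3_self [simp]:
  "a \<bullet> cross3 a b = 0" "cross3 a b \<bullet> a = 0" "b \<bullet> cross3 a b = 0" "cross3 b a \<bullet> a = 0"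
  by (simp_all add: cross3_simps)

lemma inner_cross3_cross3: "cross3 a b \<bullet> cross3 a b = (a \<bullet> a) * (b \<bullet> b) - (a \<bullet> b)\<^sup>2"
  by (simp add: cross3_simps power2_eq_square)

definition xv_comb :: "real \<Rightarrow> real \<Rightarrow> r3 \<Rightarrow> r3 \<Rightarrow> r3" where
  "xv_comb A B x v = A *\<^sub>R x + B *\<^sub>R cross3 x v"

lemma inner_xv_comb:
  assumes "x \<bullet> x = 1" "x \<bullet> v = 0"
  shows "xv_comb A B x v \<bullet> xv_comb C D x v = A * C + B * D * (v \<bullet> v)"
  using assms by (simp add: xv_comb_def inner_add_left inner_add_right inner_cross3_cross3)

definition disk_gap :: "real \<Rightarrow> real \<Rightarrow> r3 \<Rightarrow> real" where
  "disk_gap R1 R2 v = sqrt (4*R1*R2 - v \<bullet> v)"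

definition disk_to_pairs :: "real \<Rightarrow> real \<Rightarrow> r3 \<times> r3 \<Rightarrow> r3 \<times> r3" where
  "disk_to_pairs R1 R2 p = (let q = disk_gap R1 R2 (snd p) in
     (xv_comb (coef_x R1 R2 q) (coef_xv R1 R2 q) (fst p) (snd p),
      xv_comb (- coef_x R2 R1 q) (coef_xv R2 R1 q) (fst p) (snd p)))"

definition pair_gap :: "real \<Rightarrow> real \<Rightarrow> r3 \<times> r3 \<Rightarrow> real" where
  "pair_gap R1 R2 q = sqrt (2*R1*R2*(1 - fst q \<bullet> snd q))"

(* v = \<mu> \<times> x, since \<mu> = x \<times> v - s x with x a unit vector orthogonal to v. *)
definition pairs_to_disk :: "real \<Rightarrow> real \<Rightarrow> r3 \<times> r3 \<Rightarrow> r3 \<times> r3" where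
  "pairs_to_disk R1 R2 q = (let t = pair_gap R1 R2 q;
       x = coef_N R1 R2 t *\<^sub>R fst q - coef_N R2 R1 t *\<^sub>R snd q in
     (x, cross3 (R1 *\<^sub>R fst q + R2 *\<^sub>R snd q) x))"

lemma disk_gap_pos: "R1 > 0 \<Longrightarrow> R2 > 0 \<Longrightarrow> v \<bullet> v < 4*R1*R2 \<Longrightarrow> disk_gap R1 R2 v > 0"
  by (simp add: disk_gap_def)

lemma inner_self_eq_disk_gap:
  "v \<bullet> v < 4*R1*R2 \<Longrightarrow> v \<bullet> v = 4*R1*R2 - (disk_gap R1 R2 v)\<^sup>2"
  by (simp add: disk_gap_def)

lemma disk_to_pairs_sphere_energy:
  assumes "R1 > 0" "R2 > 0" "x \<bullet> x = 1" "x \<bullet> v = 0" "v \<bullet> v < 4*R1*R2"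
  defines "N \<equiv> fst (disk_to_pairs R1 R2 (x, v))" and "S \<equiv> snd (disk_to_pairs R1 R2 (x, v))"
  shows "N \<bullet> N = 1" "S \<bullet> S = 1" "R1 * R2 * (1 - N \<bullet> S) = (disk_gap R1 R2 v)\<^sup>2 / 2"
proof -
  define q where "q = disk_gap R1 R2 v"
  have q: "q > 0" "v \<bullet> v = 4*R1*R2 - q\<^sup>2"
    using disk_gap_pos[OF assms(1,2,5)] inner_self_eq_disk_gap[OF assms(5)] by (simp_all add: q_def)
  have NS: "N = xv_comb (coef_x R1 R2 q) (coef_xv R1 R2 q) x v"
    "S = xv_comb (- coef_x R2 R1 q) (coef_xv R2 R1 q) x v"
    by (simp_all add: N_def S_def disk_to_pairs_def Let_def q_def)
  show "N \<bullet> N = 1" "S \<bullet> S = 1"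
    using coef_norm[OF assms(1,2) q(1)] coef_norm[OF assms(2,1) q(1)]
    by (simp_all add: NS inner_xv_comb assms(3,4) q(2) power2_eq_square mult_ac)
  show "R1 * R2 * (1 - N \<bullet> S) = (disk_gap R1 R2 v)\<^sup>2 / 2"
    using coef_energy[OF assms(1,2) q(1)]
    by (simp add: NS inner_xv_comb assms(3,4) q(2) q_def[symmetric] algebra_simps)
qed

lemma disk_to_pairs_moment:
  assumes "R1 > 0" "R2 > 0" "v \<bullet> v < 4*R1*R2"
  shows "R1 *\<^sub>R fst (disk_to_pairs R1 R2 (x, v)) + R2 *\<^sub>R snd (disk_to_pairs R1 R2 (x, v))
    = cross3 x v - (R2 - R1) *\<^sub>R x"
proof -
  define q where "q = disk_gap R1 R2 v"
  have q: "q > 0" using disk_gap_pos[OF assms] by (simp add: q_def)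
  have "R1 *\<^sub>R fst (disk_to_pairs R1 R2 (x, v)) + R2 *\<^sub>R snd (disk_to_pairs R1 R2 (x, v))
    = (R1 * coef_x R1 R2 q - R2 * coef_x R2 R1 q) *\<^sub>R x
      + (R1 * coef_xv R1 R2 q + R2 * coef_xv R2 R1 q) *\<^sub>R cross3 x v"
    by (simp add: disk_to_pairs_def Let_def xv_comb_def q_def[symmetric] algebra_simps)
  then show ?thesis
    using coef_x_mu[OF assms(1,2) q] coef_xv_mu[OF assms(1,2) q] by (simp add: algebra_simps)
qed

lemma pairs_to_disk_disk_to_pairs:
  assumes "R1 > 0" "R2 > 0" "x \<bullet> x = 1" "x \<bullet> v = 0" "v \<bullet> v < 4*R1*R2"
  shows "pairs_to_disk R1 R2 (disk_to_pairs R1 R2 (x, v)) = (x, v)"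
proof -
  define q where "q = disk_gap R1 R2 v"
  have q: "q > 0" using disk_gap_pos[OF assms(1,2,5)] by (simp add: q_def)
  note sphere = disk_to_pairs_sphere_energy[OF assms]
  have "2*R1*R2*(1 - fst (disk_to_pairs R1 R2 (x, v)) \<bullet> snd (disk_to_pairs R1 R2 (x, v))) = q\<^sup>2"
    using sphere(3) by (simp add: q_def)
  then have "pair_gap R1 R2 (disk_to_pairs R1 R2 (x, v)) = sqrt (q\<^sup>2)"
    unfolding pair_gap_def by simp
  then have gap: "pair_gap R1 R2 (disk_to_pairs R1 R2 (x, v)) = q"
    using q by simp
  have "coef_N R1 R2 q *\<^sub>R fst (disk_to_pairs R1 R2 (x, v))
      - coef_N R2 R1 q *\<^sub>R snd (disk_to_pairs R1 R2 (x, v))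
    = (coef_N R1 R2 q * coef_x R1 R2 q + coef_N R2 R1 q * coef_x R2 R1 q) *\<^sub>R x
      + (coef_N R1 R2 q * coef_xv R1 R2 q - coef_N R2 R1 q * coef_xv R2 R1 q) *\<^sub>R cross3 x v"
    by (simp add: disk_to_pairs_def Let_def xv_comb_def q_def[symmetric] algebra_simps)
  also have "\<dots> = x"
    using coef_N_coef_x[OF assms(1,2) q] coef_N_coef_xv[OF assms(1,2) q] by simp
  finally have x: "coef_N R1 R2 q *\<^sub>R fst (disk_to_pairs R1 R2 (x, v))
      - coef_N R2 R1 q *\<^sub>R snd (disk_to_pairs R1 R2 (x, v)) = x" .
  have "cross3 (cross3 x v - (R2 - R1) *\<^sub>R x) x = v"
    using assms(3,4)
    by (simp add: Cross3.left_diff_distrib cross_mult_left cross3_cross3_left inner_commute)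
  then show ?thesis
    unfolding pairs_to_disk_def Let_def gap x disk_to_pairs_moment[OF assms(1,2,5)] by simp
qed

lemma inner_lt_one_if_neq:
  fixes N S :: "'a::real_inner"
  assumes "N \<bullet> N = 1" "S \<bullet> S = 1" "N \<noteq> S"
  shows "N \<bullet> S < 1"
proof -
  have "(N - S) \<bullet> (N - S) > 0" using assms(3) by simp
  then show ?thesis using assms(1,2) by (simp add: inner_diff_left inner_diff_right inner_commute)
qed

lemma disk_to_pairs_pairs_to_disk:
  assumes "R1 > 0" "R2 > 0" "N \<bullet> N = 1" "S \<bullet> S = 1" "N \<noteq> S"
  defines "x \<equiv> fst (pairs_to_disk R1 R2 (N, S))" and "v \<equiv> snd (pairs_to_disk R1 R2 (N, S))"
  shows "x \<bullet> x = 1" "x \<bullet> v = 0" "v \<bullet> v < 4*R1*R2"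
    and "disk_to_pairs R1 R2 (x, v) = (N, S)"
proof -
  define c where "c = N \<bullet> S"
  have c1: "c < 1" using inner_lt_one_if_neq[OF assms(3-5)] by (simp add: c_def)
  define q where "q = pair_gap R1 R2 (N, S)"
  have qq: "q\<^sup>2 = 2*R1*R2*(1 - c)" and q: "q > 0"
    using assms(1,2) c1 by (simp_all add: q_def pair_gap_def c_def)
  have c: "c = 1 - q\<^sup>2/(2*R1*R2)" using qq assms(1,2) by (simp add: field_simps)
  define T where "T = R1 *\<^sub>R N + R2 *\<^sub>R S"
  have x_eq: "x = coef_N R1 R2 q *\<^sub>R N - coef_N R2 R1 q *\<^sub>R S"
    and v_eq: "v = cross3 T x"
    by (simp_all add: x_def v_def pairs_to_disk_def Let_def q_def T_def)
  have SN: "S \<bullet> N = c" by (simp add: c_def inner_commute)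
  have "x \<bullet> x = (coef_N R1 R2 q)\<^sup>2 - 2 * coef_N R1 R2 q * coef_N R2 R1 q * c + (coef_N R2 R1 q)\<^sup>2"
    unfolding x_eq by (simp add: inner_diff_left inner_diff_right assms(3,4) SN c_def[symmetric]
        power2_eq_square algebra_simps)
  then show xx: "x \<bullet> x = 1" using coef_N_norm[OF assms(1,2) q] by (simp add: c)
  have "T \<bullet> x = R1 * coef_N R1 R2 q - R2 * coef_N R2 R1 q
      + (R2 * coef_N R1 R2 q - R1 * coef_N R2 R1 q) * c"
    unfolding x_eq T_def by (simp add: inner_diff_left inner_diff_right inner_add_left inner_add_right
        assms(3,4) SN c_def[symmetric] algebra_simps)
  then have Tx: "T \<bullet> x = R1 - R2" using coef_N_mu[OF assms(1,2) q] by (simp add: c)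
  have TT: "T \<bullet> T = R1\<^sup>2 + R2\<^sup>2 + 2*R1*R2*c"
    unfolding T_def by (simp add: inner_add_left inner_add_right assms(3,4) SN c_def[symmetric]
        algebra_simps power2_eq_square)
  have vv: "v \<bullet> v = 4*R1*R2 - q\<^sup>2"
    unfolding v_eq inner_cross3_cross3 xx TT Tx using qq by (simp add: algebra_simps power2_eq_square)
  show "x \<bullet> v = 0" by (simp add: v_eq)
  show "v \<bullet> v < 4*R1*R2" using vv q by simp
  have gap: "disk_gap R1 R2 v = q" unfolding disk_gap_def vv using q by simp
  have xv: "cross3 x v = T - (R1 - R2) *\<^sub>R x"
    by (simp add: v_eq Lagrange xx inner_commute Tx)
  have "fst (disk_to_pairs R1 R2 (x, v))
    = ((coef_x R1 R2 q + (R2 - R1) * coef_xv R1 R2 q) * coef_N R1 R2 q + R1 * coef_xv R1 R2 q) *\<^sub>R N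
      - ((coef_x R1 R2 q + (R2 - R1) * coef_xv R1 R2 q) * coef_N R2 R1 q - R2 * coef_xv R1 R2 q) *\<^sub>R S"
    unfolding disk_to_pairs_def Let_def xv_comb_def fst_conv snd_conv gap xv
    by (simp add: x_eq T_def algebra_simps)
  also have "\<dots> = N" using coef_N_right_inverse[OF assms(1,2) q] by simp
  finally have N: "fst (disk_to_pairs R1 R2 (x, v)) = N" .
  have "snd (disk_to_pairs R1 R2 (x, v))
    = ((coef_x R2 R1 q + (R1 - R2) * coef_xv R2 R1 q) * coef_N R2 R1 q + R2 * coef_xv R2 R1 q) *\<^sub>R S
      - ((coef_x R2 R1 q + (R1 - R2) * coef_xv R2 R1 q) * coef_N R1 R2 q - R1 * coef_xv R2 R1 q) *\<^sub>R N"
    unfolding disk_to_pairs_def Let_def xv_comb_def fst_conv snd_conv gap xv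
    by (simp add: x_eq T_def algebra_simps)
  also have "\<dots> = S" using coef_N_right_inverse[OF assms(2,1) q] by simp
  finally have S: "snd (disk_to_pairs R1 R2 (x, v)) = S" .
  show "disk_to_pairs R1 R2 (x, v) = (N, S)" using N S by (simp add: prod_eq_iff)
qed

section \<open>Equivariance\<close>

definition proper_isometry :: "(r3 \<Rightarrow> r3) \<Rightarrow> bool" where
  "proper_isometry g \<longleftrightarrow>
     orthogonal_transformation g \<and> (\<forall>a b. cross3 (g a) (g b) = g (cross3 a b))"

lemma proper_isometryD:
  assumes "proper_isometry g"
  shows "linear g" "g a \<bullet> g b = a \<bullet> b" "cross3 (g a) (g b) = g (cross3 a b)" "surj g"
  using assms orthogonal_transformation_surj
  by (auto simp: proper_isometry_def orthogonal_transformation_def)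

lemma proper_isometry_SO3:
  assumes "g \<in> SO3"
  shows "proper_isometry ((*v) g)"
  using assms cross_rotation_matrix
  by (auto simp: proper_isometry_def SO3_def rotation_matrix_def orthogonal_transformation_matrix)

lemma xv_comb_proper_isometry:
  "proper_isometry g \<Longrightarrow> xv_comb A B (g x) (g v) = g (xv_comb A B x v)"
  by (simp add: xv_comb_def proper_isometryD linear_add linear_scale)

lemma disk_to_pairs_proper_isometry:
  "proper_isometry g \<Longrightarrow>
    disk_to_pairs R1 R2 (g x, g v)
      = (g (fst (disk_to_pairs R1 R2 (x, v))), g (snd (disk_to_pairs R1 R2 (x, v))))"
  by (simp add: disk_to_pairs_def Let_def disk_gap_def xv_comb_proper_isometry proper_isometryD)

lemma sigma_proper_isometry: "proper_isometry g \<Longrightarrow> sigma (g x) (g u) (g w) = sigma x u w"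
  by (simp add: sigma_def proper_isometryD)

lemma omega_prod_proper_isometry:
  "proper_isometry g \<Longrightarrow>
    omega_prod R1 R2 (g N, g S) (g a1, g b1) (g a2, g b2)
      = omega_prod R1 R2 (N, S) (a1, b1) (a2, b2)"
  by (simp add: omega_prod_def sigma_proper_isometry)

lemma omega_disk_proper_isometry:
  "proper_isometry g \<Longrightarrow>
    omega_disk s (g x, g v) (g u1, g w1) (g u2, g w2) = omega_disk s (x, v) (u1, w1) (u2, w2)"
  by (simp add: omega_disk_def dalpha_def sigma_proper_isometry proper_isometryD)

lemma exists_unit_orthogonal:
  fixes x :: r3
  assumes "x \<bullet> x = 1"
  obtains e where "e \<bullet> e = 1" "x \<bullet> e = 0"
proof -
  obtain c where "c \<noteq> 0" "x \<bullet> c = 0"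
    using cross_basis_nonzero[of x] assms dot_cross_self(1) by (metis inner_zero_right zero_neq_one)
  then show ?thesis
    by (intro that[of "c /\<^sub>R norm c"]) (simp_all add: power2_norm_eq_inner[symmetric] divide_simps)
qed

lemma proper_isometry_frame:
  fixes x v :: r3
  assumes "x \<bullet> x = 1" "x \<bullet> v = 0"
  obtains g where "proper_isometry g" "g (vector [1, 0, 0]) = x" "g (vector [0, norm v, 0]) = v"
proof -
  obtain e where e: "e \<bullet> e = 1" "x \<bullet> e = 0" "v = norm v *\<^sub>R e"
  proof (cases "v = 0")
    case True
    then show ?thesis using exists_unit_orthogonal[OF assms(1)] that by auto
  next
    case False
    then show ?thesis
      using assms by (intro that[of "v /\<^sub>R norm v"])
        (simp_all add: power2_norm_eq_inner[symmetric] divide_simps)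
  qed
  define f where "f = cross3 x e"
  define g where "g a = (a$1) *\<^sub>R x + (a$2) *\<^sub>R e + (a$3) *\<^sub>R f" for a :: r3
  have orth: "e \<bullet> x = 0" "x \<bullet> f = 0" "f \<bullet> x = 0" "e \<bullet> f = 0" "f \<bullet> e = 0" "f \<bullet> f = 1"
    using assms(1) e(1,2) by (simp_all add: f_def inner_cross3_cross3 inner_commute)
  have cross:
    "cross3 e x = - f" "cross3 x f = - e" "cross3 f x = e" "cross3 e f = x" "cross3 f e = - x"
    using assms(1) e(1,2) orth
    by (simp_all add: f_def Lagrange cross3_cross3_left inner_commute cross_skew[of e x])
  have "linear g"
    by (rule linearI) (simp_all add: g_def algebra_simps)
  moreover have "g a \<bullet> g b = a \<bullet> b" for a b
  proof -
    have "g a \<bullet> g b = a$1 * b$1 + a$2 * b$2 + a$3 * b$3"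
      by (simp add: g_def inner_add_left inner_add_right assms(1) e(1,2) orth algebra_simps)
    then show ?thesis by (simp add: inner_vec_def sum_3)
  qed
  moreover have "cross3 (g a) (g b) = g (cross3 a b)" for a b
    by (simp add: g_def cross_add_left cross_add_right cross_mult_left cross_mult_right cross
        cross_components f_def[symmetric] algebra_simps)
  ultimately have "proper_isometry g"
    by (simp add: proper_isometry_def orthogonal_transformation_def)
  moreover have "g (vector [1, 0, 0]) = x" "g (vector [0, norm v, 0]) = v"
    using e(3) by (simp_all add: g_def)
  ultimately show ?thesis using that by blast
qed

section \<open>Symplecticity\<close>

definition xv_comb_deriv :: "real \<Rightarrow> real \<Rightarrow> real \<Rightarrow> real \<Rightarrow> r3 \<Rightarrow> r3 \<Rightarrow> r3 \<Rightarrow> r3 \<Rightarrow> r3" where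
  "xv_comb_deriv A B dA dB x v u w = xv_comb dA dB x v + A *\<^sub>R u + B *\<^sub>R (cross3 u v + cross3 x w)"

lemma has_derivative_xv_comb:
  assumes "(\<alpha> has_derivative \<alpha>') (at p)" "(\<beta> has_derivative \<beta>') (at p)"
  shows "((\<lambda>p. xv_comb (\<alpha> p) (\<beta> p) (fst p) (snd p)) has_derivative
    (\<lambda>h. xv_comb_deriv (\<alpha> p) (\<beta> p) (\<alpha>' h) (\<beta>' h) (fst p) (snd p) (fst h) (snd h))) (at p)"
proof -
  have fst: "(fst has_derivative fst) (at p)" and snd: "(snd has_derivative snd) (at p)"
    by (simp_all add: bounded_linear_imp_has_derivative bounded_linear_fst bounded_linear_snd)
  have cross: "((\<lambda>p. cross3 (fst p) (snd p)) has_derivative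
      (\<lambda>h. cross3 (fst p) (snd h) + cross3 (fst h) (snd p))) (at p)"
    using bounded_bilinear.FDERIV[OF bilinear_cross[unfolded bilinear_conv_bounded_bilinear]
        fst snd] .
  show ?thesis
    unfolding xv_comb_def
    using has_derivative_add[OF has_derivative_scaleR[OF assms(1) fst]
        has_derivative_scaleR[OF assms(2) cross]]
    by (simp add: xv_comb_deriv_def xv_comb_def algebra_simps)
qed

definition disk_to_pairs_deriv :: "real \<Rightarrow> real \<Rightarrow> r3 \<times> r3 \<Rightarrow> r3 \<times> r3 \<Rightarrow> r3 \<times> r3" where
  "disk_to_pairs_deriv R1 R2 p \<xi> = (let q = disk_gap R1 R2 (snd p); dq = - (snd p \<bullet> snd \<xi>) / q in
     (xv_comb_deriv (coef_x R1 R2 q) (coef_xv R1 R2 q)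
        (dq * coef_x' R1 R2 q) (dq * coef_xv' R1 R2 q) (fst p) (snd p) (fst \<xi>) (snd \<xi>),
      xv_comb_deriv (- coef_x R2 R1 q) (coef_xv R2 R1 q)
        (- (dq * coef_x' R2 R1 q)) (dq * coef_xv' R2 R1 q) (fst p) (snd p) (fst \<xi>) (snd \<xi>)))"

lemma has_derivative_disk_to_pairs:
  assumes "R1 > 0" "R2 > 0" "snd p \<bullet> snd p < 4*R1*R2"
  shows "(disk_to_pairs R1 R2 has_derivative disk_to_pairs_deriv R1 R2 p) (at p)"
proof -
  define q where "q = disk_gap R1 R2 (snd p)"
  have q: "q > 0" using disk_gap_pos[OF assms] by (simp add: q_def)
  have "((\<lambda>p. 4*R1*R2 - snd p \<bullet> snd p) has_derivative (\<lambda>h. - (2 * (snd p \<bullet> snd h)))) (at p)"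
    by (auto intro!: derivative_eq_intros simp: inner_commute)
  from DERIV_compose_FDERIV[OF DERIV_real_sqrt this] assms(3)
  have "((\<lambda>p. disk_gap R1 R2 (snd p)) has_derivative (\<lambda>h. - (snd p \<bullet> snd h) / q)) (at p)"
    by (simp add: disk_gap_def q_def divide_simps)
  note gap = this[THEN DERIV_compose_FDERIV[rotated], unfolded q_def[symmetric]]
  note coef =
    has_real_derivative_coef_x[OF assms(1,2) q] has_real_derivative_coef_xv[OF assms(1,2) q]
    has_real_derivative_coef_x[OF assms(2,1) q] has_real_derivative_coef_xv[OF assms(2,1) q]
  show ?thesis
    using has_derivative_Pair[OF
        has_derivative_xv_comb[OF gap[OF coef(1)] gap[OF coef(2)]]
        has_derivative_xv_comb[OF has_derivative_minus[OF gap[OF coef(3)]] gap[OF coef(4)]]]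
    by (simp add: disk_to_pairs_def[abs_def] disk_to_pairs_deriv_def[abs_def] Let_def q_def)
qed

lemma xv_comb_deriv_proper_isometry:
  "proper_isometry g \<Longrightarrow>
    xv_comb_deriv A B dA dB (g x) (g v) (g u) (g w) = g (xv_comb_deriv A B dA dB x v u w)"
  by (simp add: xv_comb_deriv_def xv_comb_proper_isometry proper_isometryD linear_add linear_scale)

lemma disk_to_pairs_deriv_proper_isometry:
  "proper_isometry g \<Longrightarrow> disk_to_pairs_deriv R1 R2 (g x, g v) (g u, g w) =
    (g (fst (disk_to_pairs_deriv R1 R2 (x, v) (u, w))),
     g (snd (disk_to_pairs_deriv R1 R2 (x, v) (u, w))))"
  by (simp add: disk_to_pairs_deriv_def Let_def disk_gap_def xv_comb_deriv_proper_isometry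
      proper_isometryD)

(* At (e1, r e2) the tangent vectors (u, w) are those with u$1 = 0 and w$1 = - r u$2, and the
   derivative of q is k w$2 with k = - r / q. *)
lemma sigma_xv_comb_normal_form:
  fixes A B A' B' k r a2 a3 b2 b3 c2 c3 d2 d3 :: real
  defines "x \<equiv> vector [1, 0, 0] :: r3" and "v \<equiv> vector [0, r, 0] :: r3"
  shows "sigma (xv_comb A B x v)
      (xv_comb_deriv A B (k * b2 * A') (k * b2 * B') x v
        (vector [0, a2, a3]) (vector [-(r*a2), b2, b3]))
      (xv_comb_deriv A B (k * d2 * A') (k * d2 * B') x v
        (vector [0, c2, c3]) (vector [-(r*c2), d2, d3]))
    = (A\<^sup>2 + B\<^sup>2 * r\<^sup>2) * (A * (a2*c3 - a3*c2) + B * (a3*d3 - b3*c3))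
      + (A * B + k * r * (A * B' - B * A')) * (A * (a2*d2 - b2*c2) + B * (b2*d3 - b3*d2))"
  unfolding sigma_def xv_comb_deriv_def xv_comb_def x_def v_def
  by (simp add: inner_vec_def sum_3 cross_components power2_eq_square algebra_simps)

lemma disk_to_pairs_symplectic_normal_form:
  fixes R1 R2 r a2 a3 b2 b3 c2 c3 d2 d3 :: real
  assumes "R1 > 0" "R2 > 0" "r\<^sup>2 < 4*R1*R2"
  defines "x \<equiv> vector [1, 0, 0] :: r3" and "v \<equiv> vector [0, r, 0] :: r3"
    and "u1 \<equiv> vector [0, a2, a3] :: r3" and "w1 \<equiv> vector [-(r*a2), b2, b3] :: r3"
    and "u2 \<equiv> vector [0, c2, c3] :: r3" and "w2 \<equiv> vector [-(r*c2), d2, d3] :: r3"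
  shows "omega_prod R1 R2 (disk_to_pairs R1 R2 (x, v))
      (disk_to_pairs_deriv R1 R2 (x, v) (u1, w1)) (disk_to_pairs_deriv R1 R2 (x, v) (u2, w2))
    = omega_disk (R2 - R1) (x, v) (u1, w1) (u2, w2)"
proof -
  have vv: "v \<bullet> v = r\<^sup>2" by (simp add: v_def inner_vec_def sum_3 power2_eq_square)
  define q where "q = disk_gap R1 R2 v"
  have q: "q > 0" "r\<^sup>2 = 4*R1*R2 - q\<^sup>2"
    using disk_gap_pos[of R1 R2 v] inner_self_eq_disk_gap[of v R1 R2] assms(1-3) vv
    by (simp_all add: q_def)
  define k where "k = - r / q"
  define w where "w = (4*R1*R2 - q\<^sup>2) / q"
  have kr: "k * r = - w"
    using q by (simp add: k_def w_def power2_eq_square divide_simps)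
  define A where "A = coef_x R1 R2 q"
  define B where "B = coef_xv R1 R2 q"
  define A' where "A' = coef_x' R1 R2 q"
  define B' where "B' = coef_xv' R1 R2 q"
  define C where "C = - coef_x R2 R1 q"
  define D where "D = coef_xv R2 R1 q"
  define C' where "C' = - coef_x' R2 R1 q"
  define D' where "D' = coef_xv' R2 R1 q"
  have F: "disk_to_pairs R1 R2 (x, v) = (xv_comb A B x v, xv_comb C D x v)"
    by (simp add: disk_to_pairs_def Let_def q_def A_def B_def C_def D_def)
  have "v \<bullet> w1 = r * b2" "v \<bullet> w2 = r * d2"
    by (simp_all add: v_def w1_def w2_def inner_vec_def sum_3)
  then have dF:
    "disk_to_pairs_deriv R1 R2 (x, v) (u1, w1)
      = (xv_comb_deriv A B (k * b2 * A') (k * b2 * B') x v u1 w1,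
         xv_comb_deriv C D (k * b2 * C') (k * b2 * D') x v u1 w1)"
    "disk_to_pairs_deriv R1 R2 (x, v) (u2, w2)
      = (xv_comb_deriv A B (k * d2 * A') (k * d2 * B') x v u2 w2,
         xv_comb_deriv C D (k * d2 * C') (k * d2 * D') x v u2 w2)"
    by (simp_all add: disk_to_pairs_deriv_def Let_def q_def[symmetric] k_def A_def B_def C_def D_def
        A'_def B'_def C'_def D'_def)
  have norm: "A\<^sup>2 + B\<^sup>2 * r\<^sup>2 = 1" "C\<^sup>2 + D\<^sup>2 * r\<^sup>2 = 1"
    using coef_norm[OF assms(1,2) q(1)] coef_norm[OF assms(2,1) q(1)]
    by (simp_all add: A_def B_def C_def D_def q(2) mult_ac)
  have swap: "4*R2*R1 = 4*R1*R2" by simp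
  have sigma: "A * B + k * r * (A * B' - B * A') = coef_N R1 R2 q / R1"
    "C * D + k * r * (C * D' - D * C') = - coef_N R2 R1 q / R2"
    using coef_sigma_eq_coef_N[OF assms(1,2) q(1), folded w_def]
      coef_sigma_eq_coef_N[OF assms(2,1) q(1), unfolded swap, folded w_def]
    by (simp_all add: kr A_def B_def A'_def B'_def C_def D_def C'_def D'_def algebra_simps)
  have moment: "R1 * A + R2 * C = R1 - R2" "R1 * B + R2 * D = 1"
    using coef_x_mu[OF assms(1,2) q(1)] coef_xv_mu[OF assms(1,2) q(1)]
    by (simp_all add: A_def B_def C_def D_def)
  have inverse: "A * coef_N R1 R2 q - C * coef_N R2 R1 q = 1"
    "B * coef_N R1 R2 q - D * coef_N R2 R1 q = 0"
    using coef_N_coef_x[OF assms(1,2) q(1)] coef_N_coef_xv[OF assms(1,2) q(1)]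
    by (simp_all add: A_def B_def C_def D_def mult.commute)
  have "omega_prod R1 R2 (disk_to_pairs R1 R2 (x, v))
      (disk_to_pairs_deriv R1 R2 (x, v) (u1, w1)) (disk_to_pairs_deriv R1 R2 (x, v) (u2, w2))
    = (R1 * A + R2 * C) * (a2*c3 - a3*c2) + (R1 * B + R2 * D) * (a3*d3 - b3*c3)
      + (A * coef_N R1 R2 q - C * coef_N R2 R1 q) * (a2*d2 - b2*c2)
      + (B * coef_N R1 R2 q - D * coef_N R2 R1 q) * (b2*d3 - b3*d2)"
    unfolding F dF omega_prod_def fst_conv snd_conv
    unfolding x_def v_def u1_def w1_def u2_def w2_def sigma_xv_comb_normal_form norm sigma
    using assms(1,2) by (simp add: algebra_simps)
  also have "\<dots> = (R1 - R2) * (a2*c3 - a3*c2) + (a3*d3 - b3*c3) + (a2*d2 - b2*c2)"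
    unfolding moment inverse by simp
  also have "\<dots> = omega_disk (R2 - R1) (x, v) (u1, w1) (u2, w2)"
    by (simp add: omega_disk_def dalpha_def sigma_def x_def u1_def w1_def u2_def w2_def
        inner_vec_def sum_3 cross_components algebra_simps)
  finally show ?thesis .
qed

lemma tangent_TS2_normal_form:
  assumes "proper_isometry g" "g (vector [1, 0, 0]) = x" "g (vector [0, r, 0]) = v"
    and "(u, w) \<in> tangent_TS2 (x, v)"
  obtains a2 a3 b2 b3 where "u = g (vector [0, a2, a3])" "w = g (vector [-(r*a2), b2, b3])"
proof -
  obtain u' w' where uw: "u = g u'" "w = g w'"
    using proper_isometryD(4)[OF assms(1)] by (metis surjD)
  have first: "x \<bullet> g z = z$1" for z
    using proper_isometryD(2)[OF assms(1), of "vector [1, 0, 0]" z] assms(2)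
    by (simp add: inner_vec_def sum_3)
  have "u \<bullet> v = r * u'$2"
    using proper_isometryD(2)[OF assms(1), of u' "vector [0, r, 0]"] assms(3) uw(1)
    by (simp add: inner_vec_def sum_3)
  then have "u'$1 = 0" "w'$1 = -(r * u'$2)"
    using assms(4) first[of u'] first[of w'] uw by (simp_all add: tangent_TS2_def)
  then have "u' = vector [0, u'$2, u'$3]" "w' = vector [-(r * u'$2), w'$2, w'$3]"
    by (simp_all add: vec_eq_iff forall_3)
  then show ?thesis using that uw by metis
qed

lemma disk_to_pairs_symplectic:
  assumes "R1 > 0" "R2 > 0" "x \<bullet> x = 1" "x \<bullet> v = 0" "v \<bullet> v < 4*R1*R2"
    and "\<xi>1 \<in> tangent_TS2 (x, v)" "\<xi>2 \<in> tangent_TS2 (x, v)"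
  shows "omega_prod R1 R2 (disk_to_pairs R1 R2 (x, v))
      (disk_to_pairs_deriv R1 R2 (x, v) \<xi>1) (disk_to_pairs_deriv R1 R2 (x, v) \<xi>2)
    = omega_disk (R2 - R1) (x, v) \<xi>1 \<xi>2"
proof -
  define r where "r = norm v"
  obtain g where g: "proper_isometry g" "g (vector [1, 0, 0]) = x" "g (vector [0, r, 0]) = v"
    using proper_isometry_frame[OF assms(3,4)] unfolding r_def .
  obtain a2 a3 b2 b3 where \<xi>1: "\<xi>1 = (g (vector [0, a2, a3]), g (vector [-(r * a2), b2, b3]))"
    using tangent_TS2_normal_form[OF g, of "fst \<xi>1" "snd \<xi>1"] assms(6) by (metis prod.collapse)
  obtain c2 c3 d2 d3 where \<xi>2: "\<xi>2 = (g (vector [0, c2, c3]), g (vector [-(r * c2), d2, d3]))"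
    using tangent_TS2_normal_form[OF g, of "fst \<xi>2" "snd \<xi>2"] assms(7) by (metis prod.collapse)
  have "r\<^sup>2 < 4*R1*R2" using assms(5) by (simp add: r_def power2_norm_eq_inner)
  note normal_form = disk_to_pairs_symplectic_normal_form[OF assms(1,2) this]
  show ?thesis
    unfolding \<xi>1 \<xi>2 g(2,3)[symmetric]
    by (simp add: disk_to_pairs_proper_isometry disk_to_pairs_deriv_proper_isometry
        omega_prod_proper_isometry omega_disk_proper_isometry g(1) normal_form)
qed

section \<open>Smoothness and the main theorem\<close>

lemma open_disk_domain: "open {p :: r3 \<times> r3. snd p \<bullet> snd p < c}"
  by (rule open_Collect_less) (auto intro!: continuous_intros)

lemma open_pairs_domain: "open {q :: r3 \<times> r3. fst q \<bullet> snd q < 1}"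
  by (rule open_Collect_less) (auto intro!: continuous_intros)

lemma smooth_on_disk_to_pairs:
  assumes "R1 > 0" "R2 > 0"
  shows "smooth_on {p. snd p \<bullet> snd p < 4*R1*R2} (disk_to_pairs R1 R2)"
  unfolding smooth_on_def
proof
  fix k
  define U where "U = {p :: r3 \<times> r3. snd p \<bullet> snd p < 4*R1*R2}"
  have U: "open U"
    unfolding U_def by (rule open_disk_domain)
  have fst: "Ck_on k U fst" and snd: "Ck_on k U snd"
    by (simp_all only: Ck_on_bounded_linear[OF U] bounded_linear_fst bounded_linear_snd)
  have gap_pos: "disk_gap R1 R2 (snd p) > 0" if "p \<in> U" for p
    using that disk_gap_pos[OF assms] by (simp add: U_def)
  have radicand: "Ck_on k U (\<lambda>p. 4*R1*R2 - snd p \<bullet> snd p)"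
    by (intro Ck_on_diff Ck_on_inner Ck_on_const U snd)
  have "Ck_on k U (\<lambda>p. disk_gap R1 R2 (snd p))"
    unfolding disk_gap_def by (rule Ck_on_sqrt[OF U _ radicand]) (simp add: U_def)
  note coef = Ck_on_coef[OF U assms(1,2) this gap_pos] Ck_on_coef[OF U assms(2,1) this gap_pos]
  have "Ck_on k U (disk_to_pairs R1 R2)"
    unfolding disk_to_pairs_def[abs_def] Let_def xv_comb_def
    by (intro Ck_on_Pair Ck_on_add Ck_on_scaleR Ck_on_uminus Ck_on_cross3 U fst snd coef)
  then show "Ck_on k {p. snd p \<bullet> snd p < 4*R1*R2} (disk_to_pairs R1 R2)"
    by (simp add: U_def)
qed

lemma smooth_on_pairs_to_disk:
  assumes "R1 > 0" "R2 > 0"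
  shows "smooth_on {q. fst q \<bullet> snd q < 1} (pairs_to_disk R1 R2)"
  unfolding smooth_on_def
proof
  fix k
  define U where "U = {q :: r3 \<times> r3. fst q \<bullet> snd q < 1}"
  have U: "open U"
    unfolding U_def by (rule open_pairs_domain)
  have fst: "Ck_on k U fst" and snd: "Ck_on k U snd"
    by (simp_all only: Ck_on_bounded_linear[OF U] bounded_linear_fst bounded_linear_snd)
  have gap_pos: "pair_gap R1 R2 q > 0" if "q \<in> U" for q
    using that assms by (simp add: U_def pair_gap_def)
  have radicand: "Ck_on k U (\<lambda>q. 2*R1*R2*(1 - fst q \<bullet> snd q))"
    by (intro Ck_on_mult Ck_on_diff Ck_on_inner Ck_on_const U fst snd)
  have "Ck_on k U (pair_gap R1 R2)"
    unfolding pair_gap_def[abs_def] by (rule Ck_on_sqrt[OF U _ radicand]) (simp add: U_def assms)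
  note coef = Ck_on_coef[OF U assms(1,2) this gap_pos] Ck_on_coef[OF U assms(2,1) this gap_pos]
  have "Ck_on k U (pairs_to_disk R1 R2)"
    unfolding pairs_to_disk_def[abs_def] Let_def
    by (intro Ck_on_Pair Ck_on_add Ck_on_diff Ck_on_scaleR Ck_on_cross3 Ck_on_const U fst snd coef)
  then show "Ck_on k {q. fst q \<bullet> snd q < 1} (pairs_to_disk R1 R2)"
    by (simp add: U_def)
qed

lemma disk_bundle_iff:
  assumes "R1 > 0" "R2 > 0"
  shows "p \<in> disk_bundle (2 * sqrt (R1 * R2)) \<longleftrightarrow>
    fst p \<bullet> fst p = 1 \<and> fst p \<bullet> snd p = 0 \<and> snd p \<bullet> snd p < 4*R1*R2"
proof -
  have "norm (snd p) < 2 * sqrt (R1 * R2) \<longleftrightarrow> sqrt (snd p \<bullet> snd p) < sqrt (4*R1*R2)"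
    by (simp add: norm_eq_sqrt_inner real_sqrt_mult mult.assoc)
  then show ?thesis
    by (cases p) (auto simp: disk_bundle_def TS2_def norm_eq_1)
qed

lemma disk_bundleE:
  assumes "R1 > 0" "R2 > 0" "p \<in> disk_bundle (2 * sqrt (R1 * R2))"
  obtains x v where "p = (x, v)" "x \<bullet> x = 1" "x \<bullet> v = 0" "v \<bullet> v < 4*R1*R2"
  using assms by (cases p) (simp add: disk_bundle_iff)

lemma S2xS2_minus_diag_iff:
  "q \<in> S2xS2_minus_diag \<longleftrightarrow> fst q \<bullet> fst q = 1 \<and> snd q \<bullet> snd q = 1 \<and> fst q \<noteq> snd q"
  by (cases q) (auto simp: S2xS2_minus_diag_def S2_def diag_S2_def norm_eq_1)

lemma diffeo_betw_disk_to_pairs: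
  assumes "R1 > 0" "R2 > 0"
  shows "diffeo_betw (disk_to_pairs R1 R2) (disk_bundle (2 * sqrt (R1 * R2))) S2xS2_minus_diag"
proof -
  let ?D = "disk_bundle (2 * sqrt (R1 * R2))"
  have to_pairs: "disk_to_pairs R1 R2 p \<in> S2xS2_minus_diag"
    and left_inverse: "pairs_to_disk R1 R2 (disk_to_pairs R1 R2 p) = p" if "p \<in> ?D" for p
  proof -
    obtain x v where p: "p = (x, v)" "x \<bullet> x = 1" "x \<bullet> v = 0" "v \<bullet> v < 4*R1*R2"
      using disk_bundleE[OF assms \<open>p \<in> ?D\<close>] .
    note sphere = disk_to_pairs_sphere_energy[OF assms p(2-4)]
    have "fst (disk_to_pairs R1 R2 p) \<noteq> snd (disk_to_pairs R1 R2 p)"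
      using disk_gap_pos[OF assms p(4)] sphere(1,3) p(1) by auto
    then show "disk_to_pairs R1 R2 p \<in> S2xS2_minus_diag"
      using sphere(1,2) p(1) by (simp add: S2xS2_minus_diag_iff)
    show "pairs_to_disk R1 R2 (disk_to_pairs R1 R2 p) = p"
      using pairs_to_disk_disk_to_pairs[OF assms p(2-4)] p(1) by simp
  qed
  have to_disk: "pairs_to_disk R1 R2 q \<in> ?D"
    and right_inverse: "disk_to_pairs R1 R2 (pairs_to_disk R1 R2 q) = q"
    if "q \<in> S2xS2_minus_diag" for q
    using disk_to_pairs_pairs_to_disk[OF assms, of "fst q" "snd q"] that
    by (simp_all add: disk_bundle_iff[OF assms] S2xS2_minus_diag_iff)
  have bij: "bij_betw (disk_to_pairs R1 R2) ?D S2xS2_minus_diag"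
    by (rule bij_betw_byWitness[where f'="pairs_to_disk R1 R2"])
      (use to_pairs left_inverse to_disk right_inverse in auto)
  have "\<forall>q\<in>S2xS2_minus_diag. pairs_to_disk R1 R2 q = inv_into ?D (disk_to_pairs R1 R2) q"
    using to_disk right_inverse
    by (auto intro!: inv_into_f_eq[OF bij_betw_imp_inj_on[OF bij], symmetric])
  moreover have "?D \<subseteq> {p. snd p \<bullet> snd p < 4*R1*R2}" "S2xS2_minus_diag \<subseteq> {q. fst q \<bullet> snd q < 1}"
    using inner_lt_one_if_neq by (auto simp: disk_bundle_iff[OF assms] S2xS2_minus_diag_iff)
  ultimately show ?thesis
    unfolding diffeo_betw_def smooth_map_on_def
    using bij open_disk_domain open_pairs_domain
      smooth_on_disk_to_pairs[OF assms] smooth_on_pairs_to_disk[OF assms] by blast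
qed

lemma symplectic_disk_to_pairs:
  assumes "R1 > 0" "R2 > 0" "p \<in> disk_bundle (2 * sqrt (R1 * R2))"
    and "\<xi>1 \<in> tangent_TS2 p" "\<xi>2 \<in> tangent_TS2 p"
  shows "omega_prod R1 R2 (disk_to_pairs R1 R2 p)
      (frechet_derivative (disk_to_pairs R1 R2) (at p) \<xi>1)
      (frechet_derivative (disk_to_pairs R1 R2) (at p) \<xi>2)
    = omega_disk (R2 - R1) p \<xi>1 \<xi>2"
proof -
  obtain x v where p: "p = (x, v)" "x \<bullet> x = 1" "x \<bullet> v = 0" "v \<bullet> v < 4*R1*R2"
    using disk_bundleE[OF assms(1-3)] .
  have "frechet_derivative (disk_to_pairs R1 R2) (at p) = disk_to_pairs_deriv R1 R2 p"
    using has_derivative_disk_to_pairs[OF assms(1,2), of p] p(1,4)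
    by (simp add: frechet_derivative_at[symmetric])
  then show ?thesis
    using disk_to_pairs_symplectic[OF assms(1,2) p(2-4)] assms(4,5) p(1) by simp
qed

lemma act_disk_to_pairs: "g \<in> SO3 \<Longrightarrow> disk_to_pairs R1 R2 (act g p) = act g (disk_to_pairs R1 R2 p)"
  using disk_to_pairs_proper_isometry[OF proper_isometry_SO3, of g R1 R2 "fst p" "snd p"]
  by (simp add: act_def)

lemma mu_prod_disk_to_pairs:
  assumes "R1 > 0" "R2 > 0" "p \<in> disk_bundle (2 * sqrt (R1 * R2))"
  shows "mu_prod R1 R2 (disk_to_pairs R1 R2 p) = mu_disk (R2 - R1) p"
proof -
  obtain x v where p: "p = (x, v)" "v \<bullet> v < 4*R1*R2"
    using disk_bundleE[OF assms] by metis
  then show ?thesis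
    using disk_to_pairs_moment[OF assms(1,2) p(2)] by (simp add: mu_disk_def mu_prod_def)
qed

lemma H_prod_disk_to_pairs:
  assumes "R1 > 0" "R2 > 0" "p \<in> disk_bundle (2 * sqrt (R1 * R2))"
  shows "H_prod R1 R2 (disk_to_pairs R1 R2 p) = (2 * sqrt (R1 * R2))\<^sup>2 / 2 - E_kin p"
proof -
  obtain x v where p: "p = (x, v)" "x \<bullet> x = 1" "x \<bullet> v = 0" "v \<bullet> v < 4*R1*R2"
    using disk_bundleE[OF assms] .
  have "(2 * sqrt (R1 * R2))\<^sup>2 / 2 - E_kin p = (disk_gap R1 R2 v)\<^sup>2 / 2"
    using assms(1,2) inner_self_eq_disk_gap[OF p(4)]
    by (simp add: p(1) E_kin_def power2_norm_eq_inner power_mult_distrib divide_simps)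
  then show ?thesis
    using disk_to_pairs_sphere_energy(3)[OF assms(1,2) p(2-4)] by (simp add: p(1) H_prod_def)
qed

theorem theorem2:
  fixes R1 R2 :: real
  assumes "R1 > 0" and "R2 > 0"
  defines "s \<equiv> R2 - R1" and "lam \<equiv> 2 * sqrt (R1 * R2)"
  shows "\<exists>F :: r3 \<times> r3 \<Rightarrow> r3 \<times> r3.
           diffeo_betw F (disk_bundle lam) S2xS2_minus_diag
         \<and> (\<exists>U. open U \<and> disk_bundle lam \<subseteq> U \<and> smooth_on U F)
         \<and> (\<forall>p\<in>disk_bundle lam. \<forall>\<xi>1\<in>tangent_TS2 p. \<forall>\<xi>2\<in>tangent_TS2 p.
              omega_prod R1 R2 (F p) (frechet_derivative F (at p) \<xi>1)
                                     (frechet_derivative F (at p) \<xi>2)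
              = omega_disk s p \<xi>1 \<xi>2)
         \<and> (\<forall>g\<in>SO3. \<forall>p\<in>disk_bundle lam. F (act g p) = act g (F p))
         \<and> (\<forall>p\<in>disk_bundle lam. mu_disk s p = mu_prod R1 R2 (F p))
         \<and> (\<forall>p\<in>disk_bundle lam. H_prod R1 R2 (F p) = lam^2 / 2 - E_kin p)"
  unfolding s_def lam_def
proof (intro exI[of _ "disk_to_pairs R1 R2"] conjI ballI)
  show "\<exists>U. open U \<and> disk_bundle (2 * sqrt (R1 * R2)) \<subseteq> U \<and> smooth_on U (disk_to_pairs R1 R2)"
    using open_disk_domain smooth_on_disk_to_pairs[OF assms(1,2)]
    by (intro exI[of _ "{p. snd p \<bullet> snd p < 4*R1*R2}"]) (auto simp: disk_bundle_iff[OF assms(1,2)])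
qed (simp_all add: assms(1,2) diffeo_betw_disk_to_pairs symplectic_disk_to_pairs act_disk_to_pairs
    mu_prod_disk_to_pairs H_prod_disk_to_pairs)

end
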